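(* For all integers $n \geq 3$ and $k \geq 4$, $h(n,k) \geq n$.
   Context: All graphs are finite and simple. A degree monotone path in a graph $G$ is a path $v_1v_2\ldots v_m$ such that $\deg(v_1)\le \cdots\le \deg(v_m)$ or $\deg(v_1)\ge \cdots\ge \deg(v_m)$; its length is its number of vertices. $mp(G)$ denotes the maximum length of a degree monotone path in $G$. For a pair $e$ of non-adjacent vertices, $G+e$ is $G$ with the edge $e$ added. A graph $G$ is $k$-saturated if $mp(G)\le k-1$ and $mp(G+e)\ge k$ for every pair $e$ of non-adjacent vertices of $G$ (so $K_m$ is $k$-saturated for $m\le k-1$). $h(n,k)$ is the minimum number of edges of a $k$-saturated graph on $n$ vertices. *)

theory Defs
  imports Main
begin

definition simple_graph :: "'a set \<Rightarrow> 'a set set \<Rightarrow> bool" where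
  "simple_graph V E \<longleftrightarrow> finite V \<and> (\<forall>e\<in>E. e \<subseteq> V \<and> card e = 2)"

definition degree :: "'a set set \<Rightarrow> 'a \<Rightarrow> nat" where
  "degree E v = card {e \<in> E. v \<in> e}"

definition is_path :: "'a set \<Rightarrow> 'a set set \<Rightarrow> 'a list \<Rightarrow> bool" where
  "is_path V E p \<longleftrightarrow> p \<noteq> [] \<and> distinct p \<and> set p \<subseteq> V \<and>
     (\<forall>i. Suc i < length p \<longrightarrow> {p ! i, p ! Suc i} \<in> E)"

definition degree_monotone_path :: "'a set \<Rightarrow> 'a set set \<Rightarrow> 'a list \<Rightarrow> bool" where
  "degree_monotone_path V E p \<longleftrightarrow> is_path V E p \<and>
     (sorted (map (degree E) p) \<or> sorted (rev (map (degree E) p)))"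

definition mp :: "'a set \<Rightarrow> 'a set set \<Rightarrow> nat" where
  "mp V E = Max (length ` {p. degree_monotone_path V E p})"

definition saturated :: "nat \<Rightarrow> 'a set \<Rightarrow> 'a set set \<Rightarrow> bool" where
  "saturated k V E \<longleftrightarrow> simple_graph V E \<and> mp V E \<le> k - 1 \<and>
     (\<forall>u\<in>V. \<forall>v\<in>V. u \<noteq> v \<longrightarrow> {u, v} \<notin> E \<longrightarrow> mp V (insert {u, v} E) \<ge> k)"

text \<open>h(n,k): minimum number of edges of a k-saturated graph on n vertices
(vertices taken as {0..<n}, which loses no generality).\<close>
definition h :: "nat \<Rightarrow> nat \<Rightarrow> nat" where
  "h n k = (LEAST m. \<exists>E :: nat set set. saturated k {0..<n} E \<and> card E = m)"

end

theory Submission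
  imports Defs
begin

text \<open>Suppose a \<open>k\<close>-saturated graph has fewer edges than vertices, and let \<open>v\<close> be a vertex of
  maximum degree. Adding a missing edge creates a degree monotone path on at least \<open>k\<close> vertices,
  and this path must pass through an endpoint of the new edge. If \<open>u\<close> is isolated, or a leaf
  not adjacent to \<open>v\<close>, join \<open>u\<close> to \<open>v\<close>: since \<open>v\<close> is now a strict maximum of the degrees, the
  new long path descends from \<open>v\<close> into \<open>u\<close> (or starts at \<open>u\<close>), which yields a path on \<open>k - 1\<close>
  vertices of the original graph starting at \<open>u\<close> with all degrees at most 2. For isolated \<open>u\<close>
  this is absurd; for a leaf it makes \<open>u\<close> the end of a path component on \<open>k - 1\<close> or \<open>k\<close>
  vertices, and a chord inside such a component creates no long monotone path. So there are no
  isolated vertices and all leaves are adjacent to \<open>v\<close>. A perfect matching is not saturated, so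
  \<open>deg v \<ge> 2\<close>; then the degree sum \<open>2|E| < 2|V|\<close> forces at least \<open>deg v\<close> leaves, so \<open>v\<close> and
  its neighbours form a star component, and a chord between two of its leaves again creates no
  long monotone path: every long path would have to pass a leaf hanging from the peak \<open>v\<close>.\<close>

definition ascending :: "('a \<Rightarrow> 'b::linorder) \<Rightarrow> 'a list \<Rightarrow> bool" where
  "ascending f p \<longleftrightarrow> (\<forall>i. Suc i < length p \<longrightarrow> f (p ! i) \<le> f (p ! Suc i))"

definition descending :: "('a \<Rightarrow> 'b::linorder) \<Rightarrow> 'a list \<Rightarrow> bool" where
  "descending f p \<longleftrightarrow> (\<forall>i. Suc i < length p \<longrightarrow> f (p ! Suc i) \<le> f (p ! i))"

lemma sorted_map_iff_ascending: "sorted (map f p) \<longleftrightarrow> ascending f p"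
  by (simp add: sorted_iff_nth_Suc ascending_def)

lemma sorted_rev_map_iff_descending: "sorted (rev (map f p)) \<longleftrightarrow> descending f p"
proof -
  have "sorted (rev (map f p)) \<longleftrightarrow> sorted_wrt (\<ge>) (map f p)"
    by (simp add: sorted_wrt_rev)
  also have "\<dots> \<longleftrightarrow> descending f p"
    by (subst sorted_wrt_iff_nth_Suc_transp) (auto simp: transp_def descending_def)
  finally show ?thesis .
qed

lemma degree_monotone_path_iff:
  "degree_monotone_path V E p \<longleftrightarrow>
     is_path V E p \<and> (ascending (degree E) p \<or> descending (degree E) p)"
  by (simp add: degree_monotone_path_def sorted_map_iff_ascending sorted_rev_map_iff_descending)

lemma descending_nth_mono:
  "descending f p \<Longrightarrow> i \<le> j \<Longrightarrow> j < length p \<Longrightarrow> f (p ! j) \<le> f (p ! i)"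
  by (induction j) (auto simp: descending_def le_Suc_eq intro: order_trans)

lemma ascending_rev_iff: "ascending f (rev p) \<longleftrightarrow> descending f p"
  unfolding ascending_def descending_def
proof (intro iffI allI impI)
  fix i assume mono: "\<forall>i. Suc i < length (rev p) \<longrightarrow> f (rev p ! i) \<le> f (rev p ! Suc i)"
    and i: "Suc i < length p"
  from mono[rule_format, of "length p - Suc (Suc i)"] i show "f (p ! Suc i) \<le> f (p ! i)"
    by (simp add: rev_nth Suc_diff_Suc)
next
  fix i assume mono: "\<forall>i. Suc i < length p \<longrightarrow> f (p ! Suc i) \<le> f (p ! i)"
    and i: "Suc i < length (rev p)"
  from mono[rule_format, of "length p - Suc (Suc i)"] i show "f (rev p ! i) \<le> f (rev p ! Suc i)"
    by (simp add: rev_nth Suc_diff_Suc)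
qed

lemma descending_rev_iff: "descending f (rev p) \<longleftrightarrow> ascending f p"
  using ascending_rev_iff[of f "rev p"] by simp

lemma descending_tl: "descending f p \<Longrightarrow> descending f (tl p)"
  by (simp add: descending_def nth_tl)

lemma monotone_no_strict_peak:
  assumes "ascending f p \<or> descending f p" and "Suc (Suc i) < length p"
  shows "\<not> (f (p ! i) < f (p ! Suc i) \<and> f (p ! Suc (Suc i)) < f (p ! Suc i))"
  using assms unfolding ascending_def descending_def by (metis Suc_lessD leD)

lemma ascending_plateau:
  assumes "f (p ! 0) \<le> c"
    and "\<And>i. 0 < i \<Longrightarrow> Suc i < length p \<Longrightarrow> f (p ! i) = c"
    and "\<And>i. 0 < i \<Longrightarrow> i < length p \<Longrightarrow> c \<le> f (p ! i)"
  shows "ascending f p"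
  unfolding ascending_def
proof (intro allI impI)
  fix i assume i: "Suc i < length p"
  show "f (p ! i) \<le> f (p ! Suc i)"
    using assms(1) assms(2)[of i] assms(3)[of "Suc i"] i by (cases "i = 0") auto
qed

definition neighbours :: "'a set set \<Rightarrow> 'a \<Rightarrow> 'a set" where
  "neighbours E x = {y. {x, y} \<in> E}"

lemma simple_graph_finite_edges: "simple_graph V E \<Longrightarrow> finite E"
  unfolding simple_graph_def by (meson Pow_iff finite_Pow_iff finite_subset subsetI)

lemma simple_graph_edgeD:
  assumes "simple_graph V E" "{x, y} \<in> E"
  shows "x \<noteq> y" "x \<in> V" "y \<in> V"
  using assms unfolding simple_graph_def by (auto simp: card_insert_if split: if_splits)

lemma simple_graph_insert_edge:
  "simple_graph V E \<Longrightarrow> a \<in> V \<Longrightarrow> b \<in> V \<Longrightarrow> a \<noteq> b \<Longrightarrow> simple_graph V (insert {a, b} E)"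
  unfolding simple_graph_def by auto

lemma card_le_degree:
  assumes "finite E" "\<forall>s\<in>S. {x, s} \<in> E" "x \<notin> S"
  shows "card S \<le> degree E x"
proof -
  have "inj_on (\<lambda>s. {x, s}) S"
    using assms(3) by (auto simp: inj_on_def doubleton_eq_iff)
  then have "card S = card ((\<lambda>s. {x, s}) ` S)"
    by (simp add: card_image)
  also have "\<dots> \<le> card {e \<in> E. x \<in> e}"
    using assms(1,2) by (intro card_mono) force+
  finally show ?thesis by (simp add: degree_def)
qed

lemma degree_pos:
  assumes "simple_graph V E" "{x, y} \<in> E"
  shows "0 < degree E x"
  using card_le_degree[of E "{y}" x] simple_graph_finite_edges[OF assms(1)]
    simple_graph_edgeD(1)[OF assms] assms(2) by simp

lemma finite_neighbours: "simple_graph V E \<Longrightarrow> finite (neighbours E x)"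
  unfolding simple_graph_def neighbours_def
  by (rule finite_subset[where B = V]) (auto simp: neighbours_def)

lemma degree_eq_card_neighbours:
  assumes "simple_graph V E"
  shows "degree E x = card (neighbours E x)"
proof -
  have "{e \<in> E. x \<in> e} = (\<lambda>y. {x, y}) ` neighbours E x"
  proof (intro set_eqI iffI)
    fix e assume "e \<in> {e \<in> E. x \<in> e}"
    moreover from this obtain a b where "e = {a, b}"
      using assms by (auto simp: simple_graph_def card_2_iff)
    ultimately show "e \<in> (\<lambda>y. {x, y}) ` neighbours E x"
      by (auto simp: neighbours_def insert_commute)
  qed (auto simp: neighbours_def)
  moreover have "inj_on (\<lambda>y. {x, y}) (neighbours E x)"
    using simple_graph_edgeD(1)[OF assms, of x x]
    by (auto simp: inj_on_def doubleton_eq_iff neighbours_def)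
  ultimately show ?thesis
    by (simp add: degree_def card_image)
qed

lemma degree_insert_edge:
  assumes "finite E" "{a, b} \<notin> E"
  shows "degree (insert {a, b} E) x = degree E x + (if x = a \<or> x = b then 1 else 0)"
proof -
  have "{e \<in> insert {a, b} E. x \<in> e} =
          (if x = a \<or> x = b then insert {a, b} {e \<in> E. x \<in> e} else {e \<in> E. x \<in> e})"
    by auto
  then show ?thesis
    using assms by (simp add: degree_def)
qed

lemma degree_one_neighbour_unique:
  assumes "simple_graph V E" "degree E x \<le> 1" "{x, a} \<in> E" "{x, b} \<in> E"
  shows "b = a"
proof (rule ccontr)
  assume "b \<noteq> a"
  have "x \<noteq> a" "x \<noteq> b" using simple_graph_edgeD(1)[OF assms(1)] assms(3,4) by blast+
  then have "card {a, b} \<le> degree E x"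
    using assms(3,4) by (intro card_le_degree simple_graph_finite_edges[OF assms(1)]) auto
  then show False using \<open>b \<noteq> a\<close> assms(2) by simp
qed

lemma degree_two_neighbour_cases:
  assumes "simple_graph V E" "degree E x \<le> 2" "{x, a} \<in> E" "{x, b} \<in> E" "a \<noteq> b" "{x, c} \<in> E"
  shows "c = a \<or> c = b"
proof (rule ccontr)
  assume "\<not> (c = a \<or> c = b)"
  have "x \<noteq> a" "x \<noteq> b" "x \<noteq> c" using simple_graph_edgeD(1)[OF assms(1)] assms(3,4,6) by blast+
  then have "card {a, b, c} \<le> degree E x"
    using assms(3,4,6) by (intro card_le_degree simple_graph_finite_edges[OF assms(1)]) auto
  moreover have "card {a, b, c} = 3" using \<open>\<not> (c = a \<or> c = b)\<close> assms(5) by auto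
  ultimately show False using assms(2) by linarith
qed

lemma degree_two_other_neighbour:
  assumes "simple_graph V E" "degree E x = 2"
  obtains b where "{x, b} \<in> E" "b \<noteq> a"
proof -
  have "\<not> neighbours E x \<subseteq> {a}"
  proof
    assume "neighbours E x \<subseteq> {a}"
    then have "card (neighbours E x) \<le> card {a}" by (intro card_mono) auto
    then show False using degree_eq_card_neighbours[OF assms(1), of x] assms(2) by simp
  qed
  then obtain b where "b \<in> neighbours E x" "b \<noteq> a" by blast
  then show thesis by (intro that) (simp_all add: neighbours_def)
qed

lemma finite_max_exists:
  fixes f :: "'a \<Rightarrow> 'b::linorder"
  assumes "finite A" "A \<noteq> {}"
  obtains a where "a \<in> A" "\<forall>x\<in>A. f x \<le> f a"
proof -
  have "Max (f ` A) \<in> f ` A" using assms by (intro Max_in) auto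
  then obtain a where "a \<in> A" "f a = Max (f ` A)" by (metis imageE)
  then show thesis using that assms(1) by simp
qed

lemma distinct_length_le: "distinct p \<Longrightarrow> set p \<subseteq> set q \<Longrightarrow> length p \<le> length q"
  by (metis card_length card_mono distinct_card finite_set order_trans)

lemma in_set_cases_head_last_interior:
  assumes "x \<in> set p"
  obtains "p ! 0 = x" | "rev p ! 0 = x" | i where "0 < i" "Suc i < length p" "p ! i = x"
proof -
  obtain i where i: "i < length p" "p ! i = x" using assms by (auto simp: in_set_conv_nth)
  have "p \<noteq> []" using assms by auto
  consider "i = 0" | "i = length p - 1" | "0 < i" "Suc i < length p" using i by linarith
  then show thesis using that i \<open>p \<noteq> []\<close> by cases (auto simp: rev_nth)
qed

lemma is_path_edge: "is_path V E p \<Longrightarrow> Suc i < length p \<Longrightarrow> {p ! i, p ! Suc i} \<in> E"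
  by (simp add: is_path_def)

lemma is_path_rev: "is_path V E p \<Longrightarrow> is_path V E (rev p)"
  unfolding is_path_def
proof (elim conjE, intro conjI allI impI)
  fix i assume edges: "\<forall>i. Suc i < length p \<longrightarrow> {p ! i, p ! Suc i} \<in> E"
    and i: "Suc i < length (rev p)"
  from edges[rule_format, of "length p - Suc (Suc i)"] i show "{rev p ! i, rev p ! Suc i} \<in> E"
    by (simp add: rev_nth Suc_diff_Suc insert_commute)
qed auto

lemma is_path_tl: "is_path V E p \<Longrightarrow> tl p \<noteq> [] \<Longrightarrow> is_path V E (tl p)"
  by (cases p) (auto simp: is_path_def nth_tl)

lemma is_path_take: "is_path V E p \<Longrightarrow> 0 < n \<Longrightarrow> is_path V E (take n p)"
  by (auto simp: is_path_def dest: in_set_takeD)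

lemma is_path_snoc:
  assumes "is_path V E p" "y \<in> V" "y \<notin> set p" "{last p, y} \<in> E"
  shows "is_path V E (p @ [y])"
proof -
  have "{(p @ [y]) ! i, (p @ [y]) ! Suc i} \<in> E" if "Suc i < Suc (length p)" for i
  proof (cases "Suc i < length p")
    case True then show ?thesis using assms(1) by (simp add: nth_append is_path_def)
  next
    case False
    with that assms(1) have "i = length p - 1" "p \<noteq> []" by (auto simp: is_path_def)
    then show ?thesis using assms(4) by (simp add: nth_append last_conv_nth)
  qed
  then show ?thesis using assms by (auto simp: is_path_def)
qed

lemma is_path_interior_degree:
  assumes "finite E" "is_path V E p" "0 < i" "Suc i < length p"
  shows "2 \<le> degree E (p ! i)"
proof -
  have "distinct p" using assms(2) by (simp add: is_path_def)
  then have "p ! (i - 1) \<noteq> p ! Suc i" "p ! i \<notin> {p ! (i - 1), p ! Suc i}"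
    using assms(3,4) by (auto simp: nth_eq_iff_index_eq)
  moreover have "{p ! i, p ! (i - 1)} \<in> E" "{p ! i, p ! Suc i} \<in> E"
    using is_path_edge[OF assms(2), of "i - 1"] is_path_edge[OF assms(2), of i] assms(3,4)
    by (simp_all add: insert_commute)
  ultimately have "card {p ! (i - 1), p ! Suc i} \<le> degree E (p ! i)"
    using assms(1) by (intro card_le_degree) auto
  then show ?thesis using \<open>p ! (i - 1) \<noteq> p ! Suc i\<close> by simp
qed

lemma is_path_within_closed_set:
  assumes "is_path V E p" "\<forall>x\<in>C. neighbours E x \<subseteq> C" "set p \<inter> C \<noteq> {}"
  shows "set p \<subseteq> C"
proof -
  have "p ! i \<in> C \<longleftrightarrow> p ! 0 \<in> C" if "i < length p" for i
    using that
  proof (induction i)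
    case (Suc i)
    then have "p ! i \<in> neighbours E (p ! Suc i)" "p ! Suc i \<in> neighbours E (p ! i)"
      using is_path_edge[OF assms(1) Suc.prems] by (simp_all add: neighbours_def insert_commute)
    then have "p ! i \<in> C \<longleftrightarrow> p ! Suc i \<in> C"
      using assms(2) by blast
    then show ?case using Suc by simp
  qed simp
  then show ?thesis using assms(3) by (auto simp: in_set_conv_nth)
qed

lemma is_path_remove_edge:
  assumes "is_path V (insert {a, b} E) p" "a \<notin> set p"
  shows "is_path V E p"
proof -
  have "{p ! i, p ! Suc i} \<in> E" if "Suc i < length p" for i
  proof -
    have "a \<notin> {p ! i, p ! Suc i}" using that assms(2) by (auto dest: nth_mem)
    then show ?thesis using is_path_edge[OF assms(1) that] by auto
  qed
  then show ?thesis using assms(1) by (simp add: is_path_def)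
qed

lemma degree_monotone_path_remove_edge:
  assumes "finite E" "{a, b} \<notin> E" "degree_monotone_path V (insert {a, b} E) p"
    "a \<notin> set p" "b \<notin> set p"
  shows "degree_monotone_path V E p"
proof -
  have same_degrees: "map (degree (insert {a, b} E)) p = map (degree E) p"
    using assms(4,5) by (intro map_cong) (auto simp: degree_insert_edge[OF assms(1,2)])
  show ?thesis
    using assms(3) is_path_remove_edge[of V a b E p] assms(4)
    unfolding degree_monotone_path_def same_degrees by simp
qed

lemma neighbour_on_tight_path:
  assumes "simple_graph V E" "is_path V E q" "2 \<le> length q" "j < length q" "{q ! j, w} \<in> E"
    and "degree E (q ! j) \<le> (if j = 0 \<or> Suc j = length q then 1 else 2)"
  shows "\<exists>i<length q. q ! i = w \<and> (Suc i = j \<or> i = Suc j)"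
proof -
  have "distinct q" using assms(2) by (simp add: is_path_def)
  consider "j = 0" | "0 < j" "Suc j = length q" | "0 < j" "Suc j < length q"
    using assms(4) by linarith
  then show ?thesis
  proof cases
    case 1
    then have "w = q ! Suc j"
      using degree_one_neighbour_unique[OF assms(1) _ is_path_edge[OF assms(2)] assms(5)] assms(3,6)
      by simp
    then show ?thesis using 1 assms(3) by auto
  next
    case 2
    then have "{q ! j, q ! (j - 1)} \<in> E"
      using is_path_edge[OF assms(2), of "j - 1"] by (simp add: insert_commute)
    then have "w = q ! (j - 1)"
      using degree_one_neighbour_unique[OF assms(1) _ _ assms(5)] assms(6) 2 by simp
    then show ?thesis using 2 by (intro exI[of _ "j - 1"]) auto
  next
    case 3
    have "{q ! j, q ! (j - 1)} \<in> E" "{q ! j, q ! Suc j} \<in> E"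
      using is_path_edge[OF assms(2), of "j - 1"] is_path_edge[OF assms(2), of j] 3
      by (simp_all add: insert_commute)
    moreover have "q ! (j - 1) \<noteq> q ! Suc j"
      using nth_eq_iff_index_eq[OF \<open>distinct q\<close>, of "j - 1" "Suc j"] 3 by simp
    ultimately have "w = q ! (j - 1) \<or> w = q ! Suc j"
      using degree_two_neighbour_cases[OF assms(1) _ _ _ _ assms(5)] assms(6) 3 by simp
    then show ?thesis
    proof
      assume "w = q ! (j - 1)"
      then show ?thesis using 3 by (intro exI[of _ "j - 1"]) auto
    next
      assume "w = q ! Suc j"
      then show ?thesis using 3 by (intro exI[of _ "Suc j"]) auto
    qed
  qed
qed

lemma degree_monotone_path_singleton: "x \<in> V \<Longrightarrow> degree_monotone_path V E [x]"
  by (simp add: degree_monotone_path_def is_path_def)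

lemma degree_monotone_path_rev:
  "degree_monotone_path V E p \<Longrightarrow> degree_monotone_path V E (rev p)"
  by (auto simp: degree_monotone_path_def is_path_rev rev_map)

lemma finite_degree_monotone_paths:
  assumes "finite V" shows "finite {p. degree_monotone_path V E p}"
proof (rule finite_subset)
  show "{p. degree_monotone_path V E p} \<subseteq> {p. set p \<subseteq> V \<and> distinct p}"
    by (auto simp: degree_monotone_path_def is_path_def)
qed (use finite_subset_distinct[OF assms] in simp)

lemma length_le_mp: "simple_graph V E \<Longrightarrow> degree_monotone_path V E p \<Longrightarrow> length p \<le> mp V E"
  unfolding mp_def simple_graph_def using finite_degree_monotone_paths by (intro Max_ge) auto

lemma mp_attained:
  assumes "simple_graph V E" "x \<in> V"
  obtains p where "degree_monotone_path V E p" "length p = mp V E"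
proof -
  have "mp V E \<in> length ` {p. degree_monotone_path V E p}"
    unfolding mp_def
    using assms finite_degree_monotone_paths degree_monotone_path_singleton[OF assms(2)]
    by (intro Max_in) (auto simp: simple_graph_def)
  then show thesis using that by auto
qed

lemma saturated_long_path:
  assumes "saturated k V E" "u \<in> V" "v \<in> V" "u \<noteq> v" "{u, v} \<notin> E"
  obtains p where "degree_monotone_path V (insert {u, v} E) p" "k \<le> length p"
proof -
  have "simple_graph V (insert {u, v} E)"
    using assms(1) by (intro simple_graph_insert_edge assms(2-4)) (simp add: saturated_def)
  then obtain p where p: "degree_monotone_path V (insert {u, v} E) p"
    "length p = mp V (insert {u, v} E)"
    using assms(2) by (rule mp_attained)
  moreover have "k \<le> mp V (insert {u, v} E)"
    using assms unfolding saturated_def by blast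
  ultimately show thesis using that by simp
qed

lemma saturated_mp_less: "saturated k V E \<Longrightarrow> 0 < k \<Longrightarrow> mp V E < k"
  unfolding saturated_def by linarith

lemma degree_monotone_path_short:
  "simple_graph V E \<Longrightarrow> mp V E < k \<Longrightarrow> degree_monotone_path V E p \<Longrightarrow> length p < k"
  using length_le_mp[of V E p] by simp

lemma ascending_path_short:
  assumes "simple_graph V E" "mp V E < k" "is_path V E p" "ascending (degree E) p"
  shows "length p < k"
  using degree_monotone_path_short[OF assms(1,2)] assms(3,4) by (simp add: degree_monotone_path_iff)

lemma pendant_of_peak_not_on_monotone_path:
  assumes "is_path V H p" "ascending f p \<or> descending f p" "3 \<le> length p"
    and pendant: "\<And>z. {x, z} \<in> H \<Longrightarrow> z = y" and "f x < f y"
    and peak: "\<And>z. {y, z} \<in> H \<Longrightarrow> z \<noteq> x \<Longrightarrow> f z < f y"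
  shows "x \<notin> set p"
proof
  have not_head: "q ! 0 \<noteq> x"
    if q: "is_path V H q" "ascending f q \<or> descending f q" "3 \<le> length q" for q
  proof
    assume "q ! 0 = x"
    then have "q ! 1 = y"
      using pendant is_path_edge[OF q(1), of 0] q(3) by simp
    moreover have "q ! 2 \<noteq> x"
      using \<open>q ! 0 = x\<close> q by (auto simp: is_path_def nth_eq_iff_index_eq)
    ultimately have "f (q ! 2) < f (q ! 1)"
      using peak is_path_edge[OF q(1), of 1] q(3) by (simp add: numeral_2_eq_2)
    then show False
      using monotone_no_strict_peak[OF q(2), of 0] q(3) \<open>q ! 0 = x\<close> \<open>q ! 1 = y\<close> \<open>f x < f y\<close>
      by (simp add: numeral_2_eq_2)
  qed
  assume "x \<in> set p"
  then show False
  proof (cases rule: in_set_cases_head_last_interior)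
    case 1 then show False using not_head[OF assms(1-3)] by simp
  next
    case 2 then show False
      using not_head[of "rev p"] is_path_rev[OF assms(1)] assms(2,3)
      by (auto simp: ascending_rev_iff descending_rev_iff)
  next
    case (3 i)
    then have "p ! (i - 1) = p ! Suc i"
      using pendant is_path_edge[OF assms(1), of "i - 1"] is_path_edge[OF assms(1), of i]
      by (metis Suc_diff_1 Suc_lessD insert_commute)
    then show False
      using assms(1) 3 by (auto simp: is_path_def nth_eq_iff_index_eq)
  qed
qed

lemma sum_degree_eq_twice_card_edges:
  assumes "simple_graph V E"
  shows "(\<Sum>x\<in>V. degree E x) = 2 * card E"
proof -
  have fin: "finite V" "finite E" and edge: "\<And>e. e \<in> E \<Longrightarrow> e \<subseteq> V \<and> card e = 2"
    using assms simple_graph_finite_edges by (auto simp: simple_graph_def)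
  have "(\<Sum>x\<in>V. degree E x) = (\<Sum>x\<in>V. \<Sum>e\<in>E. if x \<in> e then 1 else 0)"
    using fin by (simp add: degree_def sum.If_cases Int_def conj_commute)
  also have "\<dots> = (\<Sum>e\<in>E. \<Sum>x\<in>V. if x \<in> e then 1 else 0)"
    by (rule sum.swap)
  also have "\<dots> = (\<Sum>e\<in>E. card e)"
    using fin edge by (intro sum.cong) (auto simp: sum.If_cases Int_absorb2 Int_commute dest: edge)
  also have "\<dots> = 2 * card E"
    using edge by simp
  finally show ?thesis .
qed

lemma degree_le_card_leaves:
  assumes "simple_graph V E" "v \<in> V" "\<forall>x\<in>V. 0 < degree E x" "card E < card V"
  shows "degree E v \<le> card {x \<in> V. degree E x = 1}"
proof -
  define leaves where "leaves = {x \<in> V. degree E x = 1}"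
  have fin: "finite V" using assms(1) by (simp add: simple_graph_def)
  have "2 * (card V - 1) + degree E v \<le> 2 * card E + card leaves"
  proof -
    have "2 * card (V - {v}) \<le> (\<Sum>x\<in>V - {v}. degree E x + of_bool (x \<in> leaves))"
      using sum_bounded_below[of "V - {v}" 2 "\<lambda>x. degree E x + of_bool (x \<in> leaves)"] assms(3)
      by (force simp: leaves_def Suc_le_eq)
    also have "degree E v + \<dots> \<le> (\<Sum>x\<in>V. degree E x + of_bool (x \<in> leaves))"
      using sum.remove[OF fin assms(2), of "\<lambda>x. degree E x + of_bool (x \<in> leaves)"] by simp
    also have "\<dots> = 2 * card E + card leaves"
      using fin sum_degree_eq_twice_card_edges[OF assms(1)]
      by (simp add: sum.distrib leaves_def Int_def)
    finally show ?thesis using fin assms(2) by simp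
  qed
  then show ?thesis using assms(4) by (simp add: leaves_def)
qed

lemma neighbours_are_leaves:
  assumes "simple_graph V E" "v \<in> V" "\<forall>x\<in>V. 0 < degree E x" "card E < card V"
    and "{x \<in> V. degree E x = 1} \<subseteq> neighbours E v"
  shows "\<forall>x\<in>neighbours E v. degree E x = 1"
proof -
  have "card (neighbours E v) \<le> card {x \<in> V. degree E x = 1}"
    using degree_le_card_leaves[OF assms(1-4)] degree_eq_card_neighbours[OF assms(1)] by simp
  then have "{x \<in> V. degree E x = 1} = neighbours E v"
    using card_seteq[OF finite_neighbours[OF assms(1)] assms(5)] by blast
  then show ?thesis by blast
qed

section \<open>Joining a vertex of degree at most one to a vertex of maximum degree\<close>

locale low_vertex_extension =
  fixes V :: "'a set" and E :: "'a set set" and k :: nat and u v :: 'a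
  assumes simple: "simple_graph V E" and mp_less: "mp V E < k"
    and u_in: "u \<in> V" and non_edge: "{u, v} \<notin> E"
    and degree_u: "degree E u \<le> 1" and degree_u_less: "degree E u < degree E v"
    and v_max: "\<forall>x\<in>V. degree E x \<le> degree E v"
begin

abbreviation E_uv :: "'a set set" where "E_uv \<equiv> insert {u, v} E"

lemma u_ne_v: "u \<noteq> v"
  using degree_u_less by auto

lemma degree_E_uv: "degree E_uv x = degree E x + (if x = u \<or> x = v then 1 else 0)"
  using degree_insert_edge[OF simple_graph_finite_edges[OF simple] non_edge] .

lemma u_not_interior:
  assumes "is_path V E p" "0 < i" "Suc i < length p"
  shows "p ! i \<noteq> u"
  using is_path_interior_degree[OF simple_graph_finite_edges[OF simple] assms] degree_u by auto

lemma two_le_k: "2 \<le> k"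
  using length_le_mp[OF simple degree_monotone_path_singleton[OF u_in]] mp_less by simp

lemma monotone_path_in_E_short: "degree_monotone_path V E p \<Longrightarrow> length p < k"
  using degree_monotone_path_short[OF simple mp_less] .

lemma descending_path_from_u:
  assumes "is_path V E_uv q" "v \<notin> set q" "q \<noteq> []" "q ! 0 = u" "descending (degree E_uv) q"
  shows "is_path V E q" "\<forall>x\<in>set q. degree E x \<le> 2"
proof -
  show "is_path V E q"
    using is_path_remove_edge[of V v u E q] assms(1,2) by (simp add: insert_commute)
  have "degree E (q ! i) \<le> 2" if "i < length q" for i
  proof -
    have "degree E (q ! i) \<le> degree E_uv (q ! i)"
      by (simp add: degree_E_uv)
    also have "\<dots> \<le> degree E_uv (q ! 0)"
      using descending_nth_mono[OF assms(5), of 0 i] that by simp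
    finally show ?thesis using assms(4) degree_u by (simp add: degree_E_uv u_ne_v)
  qed
  then show "\<forall>x\<in>set q. degree E x \<le> 2" by (auto simp: in_set_conv_nth)
qed

lemma v_not_interior:
  assumes "degree_monotone_path V E_uv p" "0 < i" "Suc i < length p"
  shows "p ! i \<noteq> v"
proof
  assume "p ! i = v"
  have "distinct p" "set p \<subseteq> V" using assms(1) by (auto simp: degree_monotone_path_def is_path_def)
  have "degree E_uv (p ! j) < degree E_uv v" if "j < length p" "j \<noteq> i" for j
  proof -
    have "p ! j \<in> V" "p ! j \<noteq> v"
      using that \<open>p ! i = v\<close> assms(3) \<open>set p \<subseteq> V\<close> nth_mem[OF that(1)]
        nth_eq_iff_index_eq[OF \<open>distinct p\<close> that(1), of i] by auto
    then show ?thesis using v_max degree_u_less by (auto simp: degree_E_uv less_Suc_eq_le)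
  qed
  then show False
    using monotone_no_strict_peak[of "degree E_uv" p "i - 1"] assms \<open>p ! i = v\<close>
    by (auto simp: degree_monotone_path_iff)
qed

lemma long_path_from_v_descends:
  assumes p: "degree_monotone_path V E_uv p" and len: "2 \<le> length p" and head: "p ! 0 = v"
  shows "descending (degree E_uv) p"
proof -
  have "distinct p" "set p \<subseteq> V" using p by (auto simp: degree_monotone_path_def is_path_def)
  moreover have "0 < length p" "1 < length p" using len by linarith+
  ultimately have "p ! 1 \<noteq> v" "p ! 1 \<in> V"
    using head nth_eq_iff_index_eq[of p 1 0] nth_mem[of 1 p] by auto
  then have "degree E_uv (p ! 1) < degree E_uv (p ! 0)"
    using v_max head degree_u_less by (auto simp: degree_E_uv less_Suc_eq_le)
  then have "\<not> ascending (degree E_uv) p"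
    using len unfolding ascending_def by (metis One_nat_def Suc_1 Suc_le_lessD leD)
  then show ?thesis
    using p by (simp add: degree_monotone_path_iff)
qed

lemma long_path_from_v_next_u:
  assumes p: "degree_monotone_path V E_uv p" and long: "k \<le> length p" and head: "p ! 0 = v"
  shows "p ! 1 = u"
proof (rule ccontr)
  assume "p ! 1 \<noteq> u"
  have path: "is_path V E_uv p" and distinct: "distinct p" and in_V: "set p \<subseteq> V"
    using p by (auto simp: degree_monotone_path_def is_path_def)
  have descending: "descending (degree E_uv) p"
    using long_path_from_v_descends[OF p _ head] long two_le_k by simp
  have not_v: "p ! j \<noteq> v" if "0 < j" "j < length p" for j
    using that head nth_eq_iff_index_eq[OF distinct, of j 0]
    by (metis gr_implies_not0 less_nat_zero_code neq0_conv)
  have "{p ! j, p ! Suc j} \<noteq> {u, v}" if j: "Suc j < length p" for j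
  proof (cases j)
    case 0 then show ?thesis using \<open>p ! 1 \<noteq> u\<close> head u_ne_v by (auto simp: doubleton_eq_iff)
  next
    case (Suc i)
    then show ?thesis
      using not_v[of j] not_v[of "Suc j"] j by (metis doubleton_eq_iff Suc_lessD zero_less_Suc)
  qed
  then have path_E: "is_path V E p"
    using path unfolding is_path_def by blast
  have "degree E (p ! Suc j) \<le> degree E (p ! j)" if j: "Suc j < length p" for j
  proof (cases "j = 0")
    case True then show ?thesis using v_max in_V head nth_mem[OF j] by auto
  next
    case False
    then have "p ! j \<noteq> u" "p ! j \<noteq> v"
      using u_not_interior[OF path_E _ j] not_v[of j] j by auto
    have "degree E (p ! Suc j) \<le> degree E_uv (p ! Suc j)"
      by (simp add: degree_E_uv)
    also have "\<dots> \<le> degree E_uv (p ! j)"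
      using descending j by (simp add: descending_def)
    also have "\<dots> = degree E (p ! j)"
      using \<open>p ! j \<noteq> u\<close> \<open>p ! j \<noteq> v\<close> by (simp add: degree_E_uv)
    finally show ?thesis .
  qed
  then have "degree_monotone_path V E p"
    using path_E by (simp add: degree_monotone_path_iff descending_def)
  then show False using monotone_path_in_E_short long by (simp add: not_le[symmetric])
qed

lemma long_path_from_u_descends:
  assumes p: "degree_monotone_path V E_uv p" and long: "k \<le> length p"
    and head: "p ! 0 = u" and no_v: "v \<notin> set p"
  shows "descending (degree E_uv) p"
proof (rule ccontr)
  assume "\<not> descending (degree E_uv) p"
  then have ascending: "ascending (degree E_uv) p"
    using p by (simp add: degree_monotone_path_iff)
  have "distinct p" using p by (simp add: degree_monotone_path_def is_path_def)
  have "degree E (p ! j) \<le> degree E (p ! Suc j)" if j: "Suc j < length p" for j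
  proof -
    have "0 < length p" using j by linarith
    then have "p ! Suc j \<noteq> u" "p ! Suc j \<noteq> v"
      using nth_eq_iff_index_eq[OF \<open>distinct p\<close> j] head no_v nth_mem[OF j] by auto
    have "degree E (p ! j) \<le> degree E_uv (p ! j)"
      by (simp add: degree_E_uv)
    also have "\<dots> \<le> degree E_uv (p ! Suc j)"
      using ascending j by (simp add: ascending_def)
    also have "\<dots> = degree E (p ! Suc j)"
      using \<open>p ! Suc j \<noteq> u\<close> \<open>p ! Suc j \<noteq> v\<close> by (simp add: degree_E_uv)
    finally show ?thesis .
  qed
  moreover have "is_path V E p"
    using is_path_remove_edge[of V v u E p] p no_v
    by (simp add: degree_monotone_path_def insert_commute)
  ultimately have "degree_monotone_path V E p"
    by (simp add: degree_monotone_path_iff ascending_def)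
  then show False using monotone_path_in_E_short long by (simp add: not_le[symmetric])
qed

lemma path_from_u_at_head:
  assumes p: "degree_monotone_path V E_uv p" and long: "k \<le> length p"
    and head: "p ! 0 = v \<or> (p ! 0 = u \<and> v \<notin> set p)"
  obtains q where "is_path V E q" "q ! 0 = u" "k - 1 \<le> length q" "\<forall>x\<in>set q. degree E x \<le> 2"
proof (cases "p ! 0 = v")
  case True
  have path: "is_path V E_uv p" and "distinct p"
    using p by (auto simp: degree_monotone_path_def is_path_def)
  have "p = v # tl p" "tl p \<noteq> []"
    using long two_le_k True by (cases p; auto)+
  then have "v \<notin> set (tl p)" "tl p ! 0 = u"
    using \<open>distinct p\<close> long_path_from_v_next_u[OF p long True]
    by (metis distinct.simps(2), metis nth_Cons_Suc One_nat_def)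
  with descending_path_from_u[OF is_path_tl[OF path \<open>tl p \<noteq> []\<close>] _ \<open>tl p \<noteq> []\<close>]
  have "is_path V E (tl p)" "\<forall>x\<in>set (tl p). degree E x \<le> 2"
    using descending_tl[OF long_path_from_v_descends[OF p _ True]] long two_le_k by auto
  then show thesis
    using that \<open>tl p ! 0 = u\<close> long by simp
next
  case False
  then have "p ! 0 = u" "v \<notin> set p" "p \<noteq> []" using head long two_le_k by auto
  with descending_path_from_u[of p]
  have "is_path V E p" "\<forall>x\<in>set p. degree E x \<le> 2"
    using p long_path_from_u_descends[OF p long] by (auto simp: degree_monotone_path_def)
  then show thesis
    using that \<open>p ! 0 = u\<close> long by simp
qed

text \<open>Up to reversal, a long monotone path of \<open>E_uv\<close> starts at \<open>v\<close>, or at \<open>u\<close> and avoids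
  \<open>v\<close>: a path through neither vertex is already a path of \<open>E\<close>, \<open>v\<close> is a strict maximum of the
  degrees, and \<open>u\<close> has degree at most one in \<open>E\<close>.\<close>

lemma path_from_u:
  assumes p: "degree_monotone_path V E_uv p" and long: "k \<le> length p"
  obtains q where "is_path V E q" "q ! 0 = u" "k - 1 \<le> length q" "\<forall>x\<in>set q. degree E x \<le> 2"
proof -
  have rev_p: "degree_monotone_path V E_uv (rev p)" "k \<le> length (rev p)"
    using degree_monotone_path_rev[OF p] long by simp_all
  consider "v \<in> set p" | "v \<notin> set p" "u \<in> set p" | "v \<notin> set p" "u \<notin> set p" by blast
  then show thesis
  proof cases
    case 1
    then show thesis
    proof (cases rule: in_set_cases_head_last_interior)
      case 1 then show thesis using path_from_u_at_head[OF p long] that by blast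
    next
      case 2 then show thesis using path_from_u_at_head[OF rev_p] that by blast
    qed (use v_not_interior[OF p] in blast)
  next
    case 2
    then have path_E: "is_path V E p"
      using is_path_remove_edge[of V v u E p] p
      by (simp add: degree_monotone_path_def insert_commute)
    from 2(2) show thesis
    proof (cases rule: in_set_cases_head_last_interior)
      case 1 then show thesis using path_from_u_at_head[OF p long] 2 that by blast
    next
      case 2 then show thesis using path_from_u_at_head[OF rev_p] \<open>v \<notin> set p\<close> that by auto
    qed (use u_not_interior[OF path_E] in blast)
  next
    case 3
    then have "degree_monotone_path V E p"
      using degree_monotone_path_remove_edge[OF simple_graph_finite_edges[OF simple] non_edge p]
      by simp
    then show thesis using monotone_path_in_E_short long by (simp add: not_le[symmetric])
  qed
qed

end

section \<open>Paths that form a component\<close>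

definition leaf_path :: "'a set \<Rightarrow> 'a set set \<Rightarrow> 'a list \<Rightarrow> bool" where
  "leaf_path V E q \<longleftrightarrow> is_path V E q \<and> 2 \<le> length q \<and> degree E (q ! 0) = 1 \<and>
     (\<forall>i. 0 < i \<longrightarrow> Suc i < length q \<longrightarrow> degree E (q ! i) = 2)"

definition component_path :: "'a set \<Rightarrow> 'a set set \<Rightarrow> 'a list \<Rightarrow> bool" where
  "component_path V E z \<longleftrightarrow> leaf_path V E z \<and> degree E (last z) = 1"

lemma leaf_path_last: "leaf_path V E q \<Longrightarrow> last q = q ! (length q - 1)"
  by (intro last_conv_nth) (auto simp: leaf_path_def)

lemma leaf_path_ascending:
  assumes "leaf_path V E q" "2 \<le> degree E (last q)"
  shows "ascending (degree E) q"
proof (rule ascending_plateau[where c = 2])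
  show "2 \<le> degree E (q ! i)" if "0 < i" "i < length q" for i
  proof (cases "Suc i < length q")
    case False
    then have "i = length q - 1" using that by simp
    then have "q ! i = last q" using leaf_path_last[OF assms(1)] by simp
    then show ?thesis using assms(2) by simp
  qed (use assms(1) that in \<open>simp add: leaf_path_def\<close>)
qed (use assms(1) in \<open>simp_all add: leaf_path_def\<close>)

lemma leaf_path_length_le:
  assumes "simple_graph V E" "mp V E < k" "leaf_path V E q"
  shows "length q \<le> k"
proof -
  have "is_path V E (take (length q - 1) q)"
    using assms(3) by (intro is_path_take) (auto simp: leaf_path_def)
  moreover have "ascending (degree E) (take (length q - 1) q)"
    using assms(3) by (intro ascending_plateau[where c = 2]) (auto simp: leaf_path_def)
  ultimately have "length (take (length q - 1) q) < k"
    by (rule ascending_path_short[OF assms(1,2)])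
  then show ?thesis by simp
qed

lemma leaf_path_snoc:
  assumes "leaf_path V E q" "degree E (last q) = 2" "y \<in> V" "y \<notin> set q" "{last q, y} \<in> E"
  shows "leaf_path V E (q @ [y])"
proof -
  have "2 \<le> length q" using assms(1) by (simp add: leaf_path_def)
  have "degree E ((q @ [y]) ! i) = 2" if "0 < i" "Suc i < length (q @ [y])" for i
  proof (cases "Suc i < length q")
    case False
    then have "i = length q - 1" using that by simp
    then have "(q @ [y]) ! i = last q"
      using leaf_path_last[OF assms(1)] \<open>2 \<le> length q\<close> by (auto simp: nth_append)
    then show ?thesis using assms(2) by simp
  qed (use assms(1) that in \<open>simp add: leaf_path_def nth_append\<close>)
  then show ?thesis
    using assms is_path_snoc[of V E q y] by (auto simp: leaf_path_def nth_append)
qed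

lemma leaf_path_neighbour:
  assumes "simple_graph V E" "leaf_path V E q" "j < length q"
    and "Suc j < length q \<or> degree E (last q) = 1" "{q ! j, w} \<in> E"
  shows "\<exists>i<length q. q ! i = w \<and> (Suc i = j \<or> i = Suc j)"
proof (rule neighbour_on_tight_path[OF assms(1) _ _ assms(3,5)])
  show "degree E (q ! j) \<le> (if j = 0 \<or> Suc j = length q then 1 else 2)"
  proof (cases "Suc j < length q")
    case False
    then have "j = length q - 1" using assms(3) by simp
    then show ?thesis using assms(4) False leaf_path_last[OF assms(2)] by simp
  qed (use assms(2) in \<open>auto simp: leaf_path_def\<close>)
qed (use assms(2) in \<open>simp_all add: leaf_path_def\<close>)

lemma component_path_closed:
  assumes "simple_graph V E" "component_path V E z" "x \<in> set z"
  shows "neighbours E x \<subseteq> set z"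
proof
  fix y assume "y \<in> neighbours E x"
  obtain j where j: "j < length z" "z ! j = x" using assms(3) by (auto simp: in_set_conv_nth)
  then obtain i where "i < length z" "z ! i = y"
    using leaf_path_neighbour[of V E z j y] assms(1,2) \<open>y \<in> neighbours E x\<close>
    by (auto simp: component_path_def neighbours_def)
  then show "y \<in> set z" by (metis nth_mem)
qed

lemma leaf_path_other_neighbour_off:
  assumes "simple_graph V E" "leaf_path V E q" "{last q, y} \<in> E" "y \<noteq> q ! (length q - 2)"
  shows "y \<notin> set q"
proof
  assume "y \<in> set q"
  then obtain j where j: "j < length q" "q ! j = y" by (auto simp: in_set_conv_nth)
  have "y \<noteq> last q" using simple_graph_edgeD(1)[OF assms(1,3)] by simp
  then have "Suc j < length q"
    using j leaf_path_last[OF assms(2)] by (metis Suc_lessI diff_Suc_1)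
  moreover have "{q ! j, last q} \<in> E" using assms(3) j(2) by (simp add: insert_commute)
  ultimately obtain i where "i < length q" "q ! i = last q" "Suc i = j \<or> i = Suc j"
    using leaf_path_neighbour[OF assms(1,2) j(1)] by blast
  moreover have "distinct q" using assms(2) by (simp add: leaf_path_def is_path_def)
  ultimately have "i = length q - 1"
    using leaf_path_last[OF assms(2)] nth_eq_iff_index_eq[of q i "length q - 1"] by auto
  then have "j = length q - 2" using \<open>Suc i = j \<or> i = Suc j\<close> \<open>Suc j < length q\<close> by linarith
  then show False using j(2) assms(4) by simp
qed

lemma component_path_from_leaf_path:
  assumes simple: "simple_graph V E" and mp_less: "mp V E < k" and "3 \<le> k"
    and no_isolated: "\<forall>x\<in>V. 0 < degree E x"
    and q: "is_path V E q" "degree E (q ! 0) = 1" "k - 1 \<le> length q"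
    and low: "\<forall>x\<in>set q. degree E x \<le> 2"
  obtains z where "component_path V E z" "length z = k - 1 \<or> length z = k"
proof -
  have "degree E (q ! i) = 2" if "0 < i" "Suc i < length q" for i
    using is_path_interior_degree[OF simple_graph_finite_edges[OF simple] q(1) that] low that
    by (metis le_antisym nth_mem Suc_lessD)
  then have leaf: "leaf_path V E q" using q \<open>3 \<le> k\<close> by (simp add: leaf_path_def)
  have "q \<noteq> []" "set q \<subseteq> V" using leaf by (auto simp: leaf_path_def is_path_def)
  then have "last q \<in> set q" "last q \<in> V" by auto
  then have "0 < degree E (last q)" "degree E (last q) \<le> 2"
    using no_isolated low by auto
  then consider "degree E (last q) = 1" | "degree E (last q) = 2" by linarith
  then show thesis
  proof cases
    case 1
    have "length q = k - 1 \<or> length q = k"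
      using q(3) leaf_path_length_le[OF simple mp_less leaf] by linarith
    then show thesis
      using that[of q] leaf 1 by (simp add: component_path_def)
  next
    case 2
    then have "length q < k"
      using ascending_path_short[OF simple mp_less q(1) leaf_path_ascending[OF leaf]] by simp
    obtain y where y: "{last q, y} \<in> E" "y \<noteq> q ! (length q - 2)"
      using degree_two_other_neighbour[OF simple 2] by blast
    have "y \<in> V" using simple_graph_edgeD(3)[OF simple y(1)] .
    have z: "leaf_path V E (q @ [y])"
      using leaf_path_snoc[OF leaf 2 \<open>y \<in> V\<close> leaf_path_other_neighbour_off[OF simple leaf y] y(1)] .
    have "degree E y = 1"
    proof (rule ccontr)
      assume "degree E y \<noteq> 1"
      then have "2 \<le> degree E y" using no_isolated \<open>y \<in> V\<close> by fastforce
      then have "length (q @ [y]) < k"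
        using ascending_path_short[OF simple mp_less _ leaf_path_ascending[OF z]] z
        by (simp add: leaf_path_def)
      then show False using \<open>length q < k\<close> q(3) by simp
    qed
    then show thesis
      using that[of "q @ [y]"] z q(3) \<open>length q < k\<close> by (simp add: component_path_def)
  qed
qed

section \<open>Saturated graphs\<close>

lemma saturated_long_path_within:
  assumes sat: "saturated k V E" "0 < k"
    and closed: "\<forall>x\<in>C. neighbours E x \<subseteq> C"
    and ab: "a \<in> C" "b \<in> C" "a \<in> V" "b \<in> V" "a \<noteq> b" "{a, b} \<notin> E"
  obtains p where "degree_monotone_path V (insert {a, b} E) p" "k \<le> length p" "set p \<subseteq> C"
proof -
  have simple: "simple_graph V E" using sat by (simp add: saturated_def)
  obtain p where p: "degree_monotone_path V (insert {a, b} E) p" "k \<le> length p"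
    using saturated_long_path[OF sat(1) ab(3-6)] .
  have "a \<in> set p \<or> b \<in> set p"
  proof (rule ccontr)
    assume "\<not> (a \<in> set p \<or> b \<in> set p)"
    then have "degree_monotone_path V E p"
      using degree_monotone_path_remove_edge[OF simple_graph_finite_edges[OF simple] ab(6) p(1)]
      by simp
    then show False
      using degree_monotone_path_short[OF simple saturated_mp_less[OF sat]] p(2) by fastforce
  qed
  then have "set p \<inter> C \<noteq> {}" using ab(1,2) by blast
  moreover have "\<forall>x\<in>C. neighbours (insert {a, b} E) x \<subseteq> C"
    using closed ab(1,2) by (auto simp: neighbours_def doubleton_eq_iff)
  ultimately have "set p \<subseteq> C"
    using p(1) is_path_within_closed_set[of V "insert {a, b} E" p C]
    by (simp add: degree_monotone_path_def)
  then show thesis using that p by blast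
qed

lemma saturated_component_path_chord:
  assumes sat: "saturated k V E" "0 < k" and z: "component_path V E z"
    and j: "2 \<le> j" "j < length z"
  obtains p where "degree_monotone_path V (insert {z ! 0, z ! j} E) p" "k \<le> length p"
    "set p \<subseteq> set z"
proof -
  have simple: "simple_graph V E" using sat by (simp add: saturated_def)
  have path: "is_path V E z" and distinct: "distinct z" and "degree E (z ! 0) = 1"
    using z by (auto simp: component_path_def leaf_path_def is_path_def)
  have "0 < length z" "1 < length z" using j by linarith+
  then have "z ! j \<noteq> z ! 0" "z ! j \<noteq> z ! 1"
    using j nth_eq_iff_index_eq[OF distinct j(2)] by simp_all
  then have "{z ! 0, z ! j} \<notin> E"
    using degree_one_neighbour_unique[OF simple _ is_path_edge[OF path, of 0]]
      \<open>degree E (z ! 0) = 1\<close> j by auto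
  moreover have "z ! 0 \<in> set z" "z ! j \<in> set z" using j \<open>0 < length z\<close> by simp_all
  moreover have "z ! 0 \<in> V" "z ! j \<in> V" using calculation(2,3) path by (auto simp: is_path_def)
  moreover have "\<forall>x\<in>set z. neighbours E x \<subseteq> set z" using component_path_closed[OF simple z] by blast
  ultimately show thesis
    using saturated_long_path_within[OF sat] \<open>z ! j \<noteq> z ! 0\<close> that by metis
qed

text \<open>Joining the first vertex to the second-to-last one makes the last vertex a pendant of a
  strict local maximum of the degrees.\<close>

lemma component_path_chord_peak:
  assumes simple: "simple_graph V E" and z: "component_path V E z" and len: "4 \<le> length z"
    and p: "degree_monotone_path V (insert {z ! 0, z ! (length z - 2)} E) p" "3 \<le> length p"
  shows "last z \<notin> set p"
proof -
  define m a y x w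
    where "m = length z" "a = z ! 0" "y = z ! (m - 2)" "x = z ! (m - 1)" "w = z ! (m - 3)"
  define H where "H = insert {a, y} E"
  have path: "is_path V E z" and distinct: "distinct z"
    using z by (auto simp: component_path_def leaf_path_def is_path_def)
  have "last z = x" using leaf_path_last[of V E z] z by (simp add: component_path_def m_a_y_x_w_def)
  have "z \<noteq> []" using len by (cases z) auto
  have nth_ne: "z ! i \<noteq> z ! j" if "i < m" "j < m" "i \<noteq> j" for i j
    using that nth_eq_iff_index_eq[OF distinct] by (simp add: m_a_y_x_w_def)
  have distinct_xy: "a \<noteq> y" "x \<noteq> a" "x \<noteq> y" "w \<noteq> a" "w \<noteq> y" "w \<noteq> x" "y \<noteq> z ! 1"
    using nth_ne[of 0 "m - 2"] nth_ne[of "m - 1" 0] nth_ne[of "m - 1" "m - 2"] nth_ne[of "m - 3" 0]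
      nth_ne[of "m - 3" "m - 2"] nth_ne[of "m - 3" "m - 1"] nth_ne[of "m - 2" 1] len
      \<open>z \<noteq> []\<close>
    unfolding m_a_y_x_w_def by (simp_all add: m_a_y_x_w_def)
  have degrees: "degree E a = 1" "degree E x = 1" "degree E y = 2" "degree E w = 2"
    using z len \<open>last z = x\<close> unfolding m_a_y_x_w_def
    by (auto simp: component_path_def leaf_path_def)
  have edges: "{a, z ! 1} \<in> E" "{y, x} \<in> E" "{y, w} \<in> E"
    using is_path_edge[OF path, of 0] is_path_edge[OF path, of "m - 2"]
      is_path_edge[OF path, of "m - 3"] len
    unfolding m_a_y_x_w_def
    by (simp_all add: insert_commute Suc_diff_Suc numeral_2_eq_2 numeral_3_eq_3)
  have "{a, y} \<notin> E"
    using degree_one_neighbour_unique[OF simple _ edges(1)] degrees distinct_xy by auto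
  then have degree_H: "degree H t = degree E t + (if t = a \<or> t = y then 1 else 0)" for t
    unfolding H_def using degree_insert_edge[OF simple_graph_finite_edges[OF simple]] by simp
  have "x \<notin> set p"
  proof (rule pendant_of_peak_not_on_monotone_path)
    show "is_path V H p" "ascending (degree H) p \<or> descending (degree H) p"
      using p(1) by (simp_all add: degree_monotone_path_iff H_def m_a_y_x_w_def)
    show "3 \<le> length p" by (rule p(2))
    show "t = y" if "{x, t} \<in> H" for t
      using that distinct_xy degrees
        degree_one_neighbour_unique[OF simple _ edges(2)[unfolded insert_commute[of y]]]
      by (auto simp: H_def doubleton_eq_iff)
    show "degree H x < degree H y"
      using degrees distinct_xy by (simp add: degree_H)
    show "degree H t < degree H y" if "{y, t} \<in> H" "t \<noteq> x" for t
    proof (cases "t = a")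
      case False
      then have "{y, t} \<in> E" using that distinct_xy by (auto simp: H_def doubleton_eq_iff)
      then have "t = w"
        using degree_two_neighbour_cases[OF simple _ edges(3,2)] degrees distinct_xy that(2) by auto
      then show ?thesis using degrees distinct_xy by (simp add: degree_H)
    qed (use degrees distinct_xy in \<open>simp add: degree_H\<close>)
  qed
  then show ?thesis using \<open>last z = x\<close> by simp
qed

lemma saturated_no_component_path:
  assumes sat: "saturated k V E" and "4 \<le> k" and z: "component_path V E z"
    and len: "length z = k - 1 \<or> length z = k"
  shows False
proof -
  have simple: "simple_graph V E" using sat by (simp add: saturated_def)
  have "distinct z" using z by (simp add: component_path_def leaf_path_def is_path_def)
  have short: "length p \<le> length z" if "degree_monotone_path V H p" "set p \<subseteq> set z" for H p
    using that distinct_length_le by (auto simp: degree_monotone_path_def is_path_def)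
  show False
  proof (cases "length z = k")
    case False
    then have "2 \<le> length z - 1" "length z - 1 < length z" using len \<open>4 \<le> k\<close> by auto
    then obtain p where "degree_monotone_path V (insert {z ! 0, z ! (length z - 1)} E) p"
      "k \<le> length p" "set p \<subseteq> set z"
      using saturated_component_path_chord[OF sat _ z] \<open>4 \<le> k\<close> by auto
    then show False using short False len by fastforce
  next
    case True
    then have "2 \<le> length z - 2" "length z - 2 < length z" using \<open>4 \<le> k\<close> by auto
    then obtain p where p: "degree_monotone_path V (insert {z ! 0, z ! (length z - 2)} E) p"
      "k \<le> length p" "set p \<subseteq> set z"
      using saturated_component_path_chord[OF sat _ z] \<open>4 \<le> k\<close> by auto
    have "distinct p" using p(1) by (simp add: degree_monotone_path_def is_path_def)
    then have "card (set p) = card (set z)"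
      using short[OF p(1,3)] p(2) True \<open>distinct z\<close> by (simp add: distinct_card)
    then have "set p = set z" using p(3) by (simp add: card_subset_eq)
    moreover have "last z \<in> set z" using True \<open>4 \<le> k\<close> by (cases z) auto
    ultimately show False
      using component_path_chord_peak[OF simple z _ p(1)] p(2) True \<open>4 \<le> k\<close> by auto
  qed
qed

lemma saturated_leaf_star_chord:
  assumes sat: "saturated k V E" "0 < k" and leaves: "\<forall>x\<in>neighbours E v. degree E x = 1"
    and ab: "a \<in> neighbours E v" "b \<in> neighbours E v" "a \<noteq> b"
  obtains p where "degree_monotone_path V (insert {a, b} E) p" "k \<le> length p"
    "set p \<subseteq> insert v (neighbours E v)"
proof -
  have simple: "simple_graph V E" using sat by (simp add: saturated_def)
  have only_v: "w = v" if "x \<in> neighbours E v" "{x, w} \<in> E" for x w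
    using degree_one_neighbour_unique[OF simple _ _ that(2)] leaves that(1)
    by (simp add: neighbours_def insert_commute)
  have "\<forall>x\<in>insert v (neighbours E v). neighbours E x \<subseteq> insert v (neighbours E v)"
    using only_v by (auto simp: neighbours_def)
  moreover have "a \<in> V" "b \<in> V" "b \<noteq> v"
    using ab simple_graph_edgeD[OF simple] by (auto simp: neighbours_def)
  moreover have "{a, b} \<notin> E" using only_v[OF ab(1)] \<open>b \<noteq> v\<close> by blast
  ultimately show thesis
    using saturated_long_path_within[OF sat] ab that by blast
qed

lemma leaf_star_chord_peak:
  assumes simple: "simple_graph V E" and leaves: "\<forall>x\<in>neighbours E v. degree E x = 1"
    and ab: "a \<in> neighbours E v" "b \<in> neighbours E v" "a \<noteq> b"
    and x: "x \<in> neighbours E v" "x \<noteq> a" "x \<noteq> b"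
    and p: "degree_monotone_path V (insert {a, b} E) p" "3 \<le> length p"
  shows "x \<notin> set p"
proof -
  have not_v: "y \<noteq> v" if "y \<in> neighbours E v" for y
    using that simple_graph_edgeD(1)[OF simple] by (auto simp: neighbours_def)
  have only_v: "w = v" if "y \<in> neighbours E v" "{y, w} \<in> E" for y w
    using degree_one_neighbour_unique[OF simple _ _ that(2)] leaves that(1)
    by (simp add: neighbours_def insert_commute)
  have "{a, b, x} \<subseteq> neighbours E v" using ab x by simp
  then have "card {a, b, x} \<le> card (neighbours E v)"
    by (rule card_mono[OF finite_neighbours[OF simple]])
  then have degree_v: "3 \<le> degree E v"
    using degree_eq_card_neighbours[OF simple] ab(3) x(2,3) by simp
  have "{a, b} \<notin> E" using only_v[OF ab(1)] not_v[OF ab(2)] by blast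
  define H where "H = insert {a, b} E"
  have degree_H: "degree H t = degree E t + (if t = a \<or> t = b then 1 else 0)" for t
    unfolding H_def using degree_insert_edge[OF simple_graph_finite_edges[OF simple] \<open>{a, b} \<notin> E\<close>] .
  show ?thesis
  proof (rule pendant_of_peak_not_on_monotone_path)
    show "is_path V H p" "ascending (degree H) p \<or> descending (degree H) p"
      using p(1) by (simp_all add: H_def degree_monotone_path_iff)
    show "3 \<le> length p" by (rule p(2))
    show "w = v" if "{x, w} \<in> H" for w
    proof -
      have "{x, w} \<noteq> {a, b}" using x(2,3) by (auto simp: doubleton_eq_iff)
      then show ?thesis using that only_v[OF x(1)] by (simp add: H_def)
    qed
    show "degree H x < degree H v"
      using leaves x degree_v not_v[OF ab(1)] not_v[OF ab(2)] by (simp add: degree_H)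
    show "degree H w < degree H v" if "{v, w} \<in> H" "w \<noteq> x" for w
    proof -
      have "w \<in> neighbours E v"
        using that not_v[OF ab(1)] not_v[OF ab(2)]
        by (auto simp: H_def neighbours_def doubleton_eq_iff)
      then show ?thesis
        using leaves degree_v not_v[OF ab(1)] not_v[OF ab(2)] by (simp add: degree_H)
    qed
  qed
qed

lemma saturated_no_star_of_leaves:
  assumes sat: "saturated k V E" and "4 \<le> k" and v: "v \<in> V" "2 \<le> degree E v"
    and leaves: "\<forall>x\<in>neighbours E v. degree E x = 1"
  shows False
proof -
  have simple: "simple_graph V E" using sat by (simp add: saturated_def)
  have "\<not> card (neighbours E v) \<le> Suc 0"
    using v(2) degree_eq_card_neighbours[OF simple] by simp
  then obtain a b where ab: "a \<in> neighbours E v" "b \<in> neighbours E v" "a \<noteq> b"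
    using card_le_Suc0_iff_eq[OF finite_neighbours[OF simple]] by blast
  obtain p where p: "degree_monotone_path V (insert {a, b} E) p" "k \<le> length p"
    "set p \<subseteq> insert v (neighbours E v)"
    using saturated_leaf_star_chord[OF sat _ leaves ab] \<open>4 \<le> k\<close> by auto
  have "card {v, a, b} \<le> 3" by (simp add: card_insert_if)
  moreover have "4 \<le> card (set p)"
    using p(1,2) \<open>4 \<le> k\<close> distinct_card[of p] by (simp add: degree_monotone_path_def is_path_def)
  ultimately have "\<not> set p \<subseteq> {v, a, b}" using card_mono[of "{v, a, b}" "set p"] by auto
  then obtain x where x: "x \<in> set p" "x \<noteq> v" "x \<noteq> a" "x \<noteq> b" by blast
  then have "x \<in> neighbours E v" using p(3) by auto
  then show False
    using leaf_star_chord_peak[OF simple leaves ab _ x(3,4) p(1)] x(1) p(2) \<open>4 \<le> k\<close> by auto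
qed

lemma saturated_not_one_regular:
  assumes sat: "saturated k V E" and "4 \<le> k" and "3 \<le> card V"
    and one_regular: "\<forall>x\<in>V. degree E x = 1"
  shows False
proof -
  have simple: "simple_graph V E" using sat by (simp add: saturated_def)
  have "V \<noteq> {}" using \<open>3 \<le> card V\<close> by auto
  then obtain u where u: "u \<in> V" by blast
  then have "card (neighbours E u) = 1"
    using one_regular degree_eq_card_neighbours[OF simple] by simp
  then obtain w where "neighbours E u = {w}" by (rule card_1_singletonE)
  then have uw: "{u, w} \<in> E" by (simp add: neighbours_def set_eq_iff)
  have "card {u, w} \<le> 2" by (simp add: card_insert_if)
  then have "card (V - {u, w}) \<noteq> 0"
    using diff_card_le_card_Diff[of "{u, w}" V] \<open>3 \<le> card V\<close> by simp
  then have "V - {u, w} \<noteq> {}" by (metis card.empty)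
  then obtain t where t: "t \<in> V" "t \<noteq> u" "t \<noteq> w" by blast
  have "{u, t} \<notin> E"
    using degree_one_neighbour_unique[OF simple _ uw] one_regular u t(3) by auto
  define H where "H = insert {u, t} E"
  obtain p where p: "degree_monotone_path V H p" "k \<le> length p"
    unfolding H_def using saturated_long_path[OF sat u t(1) t(2)[symmetric] \<open>{u, t} \<notin> E\<close>] .
  have path: "is_path V H p" and distinct: "distinct p" and in_V: "\<And>i. i < length p \<Longrightarrow> p ! i \<in> V"
    using p(1) by (auto simp: degree_monotone_path_def is_path_def)
  have degree_H: "degree H x = (if x = u \<or> x = t then 2 else 1)" if "x \<in> V" for x
    unfolding H_def using degree_insert_edge[OF simple_graph_finite_edges[OF simple] \<open>{u, t} \<notin> E\<close>]
      one_regular that by simp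
  have interior: "p ! i = u \<or> p ! i = t" if "0 < i" "Suc i < length p" for i
    using is_path_interior_degree[OF _ path that] simple_graph_finite_edges[OF simple]
      degree_H[OF in_V[of i]] that by (simp add: H_def split: if_splits)
  have len: "0 < length p" "1 < length p" "2 < length p" "3 < length p"
    using p(2) \<open>4 \<le> k\<close> by linarith+
  have "p ! 0 \<noteq> p ! 1" "p ! 0 \<noteq> p ! 2" "p ! 3 \<noteq> p ! 1" "p ! 3 \<noteq> p ! 2" "p ! 1 \<noteq> p ! 2"
    using len nth_eq_iff_index_eq[OF distinct] by simp_all
  moreover have "p ! 1 \<in> {u, t}" "p ! 2 \<in> {u, t}"
    using interior[of 1] interior[of 2] len by simp_all
  ultimately have "{p ! 1, p ! 2} = {u, t}" "p ! 0 \<notin> {u, t}" "p ! 3 \<notin> {u, t}"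
    by auto
  then have degrees: "degree H (p ! 0) = 1" "degree H (p ! 1) = 2" "degree H (p ! 2) = 2"
    "degree H (p ! 3) = 1"
    using degree_H in_V len by auto
  have "\<not> ascending (degree H) p"
    using degrees len unfolding ascending_def by (auto intro!: exI[of _ 2])
  moreover have "\<not> descending (degree H) p"
    using degrees len unfolding descending_def by (auto intro!: exI[of _ 0])
  ultimately show False
    using p(1) by (simp add: degree_monotone_path_iff)
qed

lemma saturated_not_edgeless:
  assumes sat: "saturated k V E" and "3 \<le> k" and "2 \<le> card V"
  shows "\<exists>x\<in>V. 0 < degree E x"
proof (rule ccontr)
  assume no_edge_at: "\<not> (\<exists>x\<in>V. 0 < degree E x)"
  have simple: "simple_graph V E" using sat by (simp add: saturated_def)
  have "E = {}"
  proof (rule equals0I)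
    fix e assume "e \<in> E"
    then obtain a b where "e = {a, b}" using simple by (auto simp: simple_graph_def card_2_iff)
    then show False
      using \<open>e \<in> E\<close> no_edge_at degree_pos[OF simple] simple_graph_edgeD(2)[OF simple] by blast
  qed
  obtain a b where ab: "a \<in> V" "b \<in> V" "a \<noteq> b"
    using \<open>2 \<le> card V\<close> card_le_Suc0_iff_eq[of V]
    by (metis card.infinite not_less_eq_eq numeral_2_eq_2 zero_le)
  obtain p where p: "degree_monotone_path V {{a, b}} p" "k \<le> length p"
    using saturated_long_path[OF sat ab] \<open>E = {}\<close> by auto
  have "2 \<le> degree {{a, b}} (p ! 1)"
    using is_path_interior_degree[of "{{a, b}}" V p 1] p \<open>3 \<le> k\<close>
    by (simp add: degree_monotone_path_def)
  moreover have "degree {{a, b}} x \<le> 1" for x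
  proof -
    have "card {e \<in> {{a, b}}. x \<in> e} \<le> card {{a, b}}" by (rule card_mono) auto
    then show ?thesis by (simp add: degree_def)
  qed
  ultimately show False by (metis numeral_le_one_iff order_trans semiring_norm(69))
qed

lemma saturated_no_isolated_vertex:
  assumes sat: "saturated k V E" and "3 \<le> k"
    and v: "v \<in> V" "\<forall>x\<in>V. degree E x \<le> degree E v" "0 < degree E v" and u: "u \<in> V"
  shows "0 < degree E u"
proof (rule ccontr)
  assume "\<not> 0 < degree E u"
  then have "degree E u = 0" by simp
  have simple: "simple_graph V E" using sat by (simp add: saturated_def)
  have "{u, v} \<notin> E" using degree_pos[OF simple] \<open>degree E u = 0\<close> by fastforce
  interpret low_vertex_extension V E k u v
    using simple saturated_mp_less[OF sat] u v \<open>{u, v} \<notin> E\<close> \<open>degree E u = 0\<close> \<open>3 \<le> k\<close>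
    by unfold_locales auto
  obtain p where "degree_monotone_path V E_uv p" "k \<le> length p"
    using saturated_long_path[OF sat u v(1) u_ne_v non_edge] .
  then obtain q where q: "is_path V E q" "q ! 0 = u" "k - 1 \<le> length q"
    by (rule path_from_u)
  then have "{u, q ! 1} \<in> E" using is_path_edge[OF q(1), of 0] \<open>3 \<le> k\<close> by simp
  then show False using degree_pos[OF simple] \<open>degree E u = 0\<close> by fastforce
qed

lemma saturated_leaf_adjacent_to_max_degree:
  assumes sat: "saturated k V E" and "4 \<le> k" and no_isolated: "\<forall>x\<in>V. 0 < degree E x"
    and v: "v \<in> V" "\<forall>x\<in>V. degree E x \<le> degree E v" "2 \<le> degree E v"
    and u: "u \<in> V" "degree E u = 1"
  shows "{u, v} \<in> E"
proof (rule ccontr)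
  assume "{u, v} \<notin> E"
  have simple: "simple_graph V E" using sat by (simp add: saturated_def)
  interpret low_vertex_extension V E k u v
    using simple saturated_mp_less[OF sat] u v \<open>{u, v} \<notin> E\<close> \<open>4 \<le> k\<close>
    by unfold_locales auto
  obtain p where "degree_monotone_path V E_uv p" "k \<le> length p"
    using saturated_long_path[OF sat u(1) v(1) u_ne_v non_edge] .
  then obtain q where "is_path V E q" "q ! 0 = u" "k - 1 \<le> length q" "\<forall>x\<in>set q. degree E x \<le> 2"
    by (rule path_from_u)
  then obtain z where "component_path V E z" "length z = k - 1 \<or> length z = k"
    using component_path_from_leaf_path[OF simple mp_less _ no_isolated] u(2) \<open>4 \<le> k\<close> by auto
  then show False by (rule saturated_no_component_path[OF sat \<open>4 \<le> k\<close>])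
qed

theorem theorem2p4:
  fixes n k :: nat and V :: "'a set" and E :: "'a set set"
  assumes "n \<ge> 3" and "k \<ge> 4"
    and "card V = n" and "saturated k V E"
  shows "card E \<ge> n"
proof (rule ccontr)
  assume "\<not> n \<le> card E"
  then have few_edges: "card E < card V" using assms(3) by simp
  have sat: "saturated k V E" and "4 \<le> k" and "3 \<le> card V" using assms by simp_all
  have simple: "simple_graph V E" using sat by (simp add: saturated_def)
  have "finite V" "V \<noteq> {}" using simple \<open>3 \<le> card V\<close> by (auto simp: simple_graph_def)
  then obtain v where v: "v \<in> V" "\<forall>x\<in>V. degree E x \<le> degree E v"
    by (rule finite_max_exists)
  have "0 < degree E v"
    using saturated_not_edgeless[OF sat] \<open>4 \<le> k\<close> \<open>3 \<le> card V\<close> v(2) by fastforce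
  then have no_isolated: "\<forall>x\<in>V. 0 < degree E x"
    using saturated_no_isolated_vertex[OF sat _ v] \<open>4 \<le> k\<close> by simp
  then have "degree E v \<noteq> 1"
    using saturated_not_one_regular[OF sat \<open>4 \<le> k\<close> \<open>3 \<le> card V\<close>] v(2)
    by (metis le_antisym Suc_le_eq One_nat_def)
  then have "2 \<le> degree E v" using \<open>0 < degree E v\<close> by simp
  then have "{x \<in> V. degree E x = 1} \<subseteq> neighbours E v"
    using saturated_leaf_adjacent_to_max_degree[OF sat \<open>4 \<le> k\<close> no_isolated v]
    by (auto simp: neighbours_def insert_commute)
  then show False
    using saturated_no_star_of_leaves[OF sat \<open>4 \<le> k\<close> v(1) \<open>2 \<le> degree E v\<close>]
      neighbours_are_leaves[OF simple v(1) no_isolated few_edges] by blast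
qed

end
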